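(* Let $n\ge2$, $d\ge1$, $k\ge1$, let $V\in\mathcal{C}^{k+1}(\mathbb{R}^d,\mathbb{R})$, and let $u:(0,+\infty)\to\mathbb{R}^d$ be a global solution of $\ddot u(r)=-\frac{n-1}{r}\dot u(r)+\nabla V(u(r))$ such that $u(r)\to u_\infty$ as $r\to+\infty$ for some $u_\infty\in\mathbb{R}^d$ with $\nabla V(u_\infty)=0$ and $D^2V(u_\infty)$ positive definite. Then $\dot u(r)\to0$ as $r\to+\infty$. *)

theory Defs
  imports "HOL-Analysis.Analysis"
begin

fun Cm :: "nat \<Rightarrow> ('a::euclidean_space \<Rightarrow> real) \<Rightarrow> bool" where
  "Cm 0 f = continuous_on UNIV f"
| "Cm (Suc m) f = (f differentiable_on UNIV \<and>
      (\<forall>i\<in>Basis. Cm m (\<lambda>x. frechet_derivative f (at x) i)))"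

definition grad :: "('a::euclidean_space \<Rightarrow> real) \<Rightarrow> 'a \<Rightarrow> 'a" where
  "grad V x = (\<Sum>i\<in>Basis. frechet_derivative V (at x) i *\<^sub>R i)"

definition hess :: "('a::euclidean_space \<Rightarrow> real) \<Rightarrow> 'a \<Rightarrow> 'a \<Rightarrow> 'a \<Rightarrow> real" where
  "hess V x h k = frechet_derivative (\<lambda>y. frechet_derivative V (at y) h) (at x) k"

definition pos_def_form :: "('a::real_vector \<Rightarrow> 'a \<Rightarrow> real) \<Rightarrow> bool" where
  "pos_def_form B = (\<forall>h. h \<noteq> 0 \<longrightarrow> B h h > 0)"

end

theory Submission
  imports Defs
begin

text \<open>Write \<open>w = u'\<close> and \<open>g(r) = \<nabla>V(u(r))\<close>, so that \<open>w' = -(m/r) w + g\<close> with \<open>m = n - 1\<close>,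
  and \<open>g(r) \<rightarrow> 0\<close> because \<open>u(r) \<rightarrow> u\<^sub>\<infinity>\<close> and \<open>\<nabla>V(u\<^sub>\<infinity>) = 0\<close>. The integrating factor
  gives \<open>(r\<^sup>m w)' = r\<^sup>m g\<close>, so on a unit interval \<open>[s, s+1]\<close> with \<open>|g| \<le> \<epsilon>\<close> the speed can grow
  by at most \<open>2\<^sup>m \<epsilon>\<close>, and hence \<open>w\<close> varies by at most \<open>B = (m/s)(|w(s)| + 2\<^sup>m \<epsilon>) + \<epsilon>\<close>.
  Comparing with \<open>u(s+1) - u(s) \<rightarrow> 0\<close> yields
  \<open>|w(s)| \<le> |u(s+1) - u(s)| + (m/s)(|w(s)| + 2\<^sup>m \<epsilon>) + \<epsilon>\<close>, and for \<open>s \<ge> 2m\<close> the term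
  \<open>(m/s)|w(s)|\<close> is absorbed into the left-hand side.\<close>

lemma Cm_imp_continuous_on: "Cm m f \<Longrightarrow> continuous_on UNIV f"
  by (cases m) (auto intro: differentiable_imp_continuous_on)

lemma continuous_on_grad:
  assumes "Cm (Suc m) V"
  shows "continuous_on UNIV (grad V)"
proof -
  have "continuous_on UNIV (\<lambda>x. frechet_derivative V (at x) i)" if "i \<in> Basis" for i
    using assms that by (auto intro: Cm_imp_continuous_on)
  then show ?thesis
    unfolding grad_def[abs_def] by (intro continuous_intros) auto
qed

lemma norm_diff_le_of_vector_derivative_bound:
  fixes f :: "real \<Rightarrow> 'b::real_normed_vector"
  assumes "a \<le> b"
    and deriv: "\<And>x. x \<in> {a..b} \<Longrightarrow> (f has_vector_derivative f' x) (at x)"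
    and bound: "\<And>x. x \<in> {a..b} \<Longrightarrow> norm (f' x) \<le> C"
  shows "norm (f b - f a) \<le> C * (b - a)"
proof (cases "a = b")
  case False
  with \<open>a \<le> b\<close> have "a < b" by simp
  have "continuous_on {a..b} f"
    using deriv has_vector_derivative_continuous by (blast intro: continuous_at_imp_continuous_on)
  then have "norm (f b - f a) \<le> C * b - C * a"
    by (rule differentiable_bound_general[OF \<open>a < b\<close> _ _ deriv, of "\<lambda>x. C * x" "\<lambda>_. C"])
      (auto intro!: continuous_intros derivative_eq_intros bound
        simp: has_real_derivative_iff_has_vector_derivative[symmetric])
  then show ?thesis by (simp add: algebra_simps)
qed simp

lemma radial_ode_integrating_factor:
  fixes w g :: "real \<Rightarrow> 'a::real_normed_vector"
  assumes "x > 0"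
    and "(w has_vector_derivative (- (real m / x) *\<^sub>R w x + g x)) (at x)"
  shows "((\<lambda>r. r ^ m *\<^sub>R w r) has_vector_derivative x ^ m *\<^sub>R g x) (at x)"
proof -
  have "x ^ m * (real m / x) = real m * x ^ (m - 1)"
    using \<open>x > 0\<close> by (cases m) auto
  then have "x ^ m *\<^sub>R (- (real m / x) *\<^sub>R w x + g x) + (real m * x ^ (m - 1)) *\<^sub>R w x
      = x ^ m *\<^sub>R g x"
    by (simp add: algebra_simps)
  with has_vector_derivative_scaleR[OF DERIV_pow[of m] assms(2)] show ?thesis
    by simp
qed

lemma radial_ode_norm_le:
  fixes w g :: "real \<Rightarrow> 'a::real_normed_vector"
  assumes "1 \<le> s" "s \<le> t" "t \<le> s + 1"
    and deriv: "\<And>x. x \<in> {s..t} \<Longrightarrow>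
      (w has_vector_derivative (- (real m / x) *\<^sub>R w x + g x)) (at x)"
    and small: "\<And>x. x \<in> {s..t} \<Longrightarrow> norm (g x) \<le> \<epsilon>"
  shows "norm (w t) \<le> norm (w s) + 2 ^ m * \<epsilon>"
proof -
  have "\<epsilon> \<ge> 0" using small[of s] assms(2) by (auto intro: order_trans[OF norm_ge_zero])
  have "norm (t ^ m *\<^sub>R w t - s ^ m *\<^sub>R w s) \<le> ((s + 1) ^ m * \<epsilon>) * (t - s)"
  proof (rule norm_diff_le_of_vector_derivative_bound)
    fix x assume x: "x \<in> {s..t}"
    then show "((\<lambda>r. r ^ m *\<^sub>R w r) has_vector_derivative x ^ m *\<^sub>R g x) (at x)"
      using \<open>1 \<le> s\<close> by (intro radial_ode_integrating_factor deriv) auto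
    have "norm (x ^ m *\<^sub>R g x) = x ^ m * norm (g x)" using x \<open>1 \<le> s\<close> by simp
    also have "\<dots> \<le> (s + 1) ^ m * \<epsilon>"
      using x assms small[OF x] by (intro mult_mono power_mono) auto
    finally show "norm (x ^ m *\<^sub>R g x) \<le> (s + 1) ^ m * \<epsilon>" .
  qed fact
  also have "\<dots> \<le> (s + 1) ^ m * \<epsilon>"
    using assms \<open>\<epsilon> \<ge> 0\<close> by (intro mult_left_le) auto
  finally have "t ^ m * norm (w t) \<le> s ^ m * norm (w s) + (s + 1) ^ m * \<epsilon>"
    using assms by (auto dest: order_trans[OF norm_triangle_ineq2])
  also have "\<dots> \<le> t ^ m * norm (w s) + (2 * t) ^ m * \<epsilon>"
    using assms \<open>\<epsilon> \<ge> 0\<close> by (intro add_mono mult_right_mono power_mono) auto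
  also have "\<dots> = t ^ m * (norm (w s) + 2 ^ m * \<epsilon>)"
    by (simp add: power_mult_distrib algebra_simps)
  finally show ?thesis
    using assms by simp
qed

lemma radial_ode_speed_estimate:
  fixes u w g :: "real \<Rightarrow> 'a::real_normed_vector"
  assumes "1 \<le> s"
    and deriv_u: "\<And>x. x \<in> {s..s+1} \<Longrightarrow> (u has_vector_derivative w x) (at x)"
    and deriv_w: "\<And>x. x \<in> {s..s+1} \<Longrightarrow>
      (w has_vector_derivative (- (real m / x) *\<^sub>R w x + g x)) (at x)"
    and small: "\<And>x. x \<in> {s..s+1} \<Longrightarrow> norm (g x) \<le> \<epsilon>"
  shows "norm (w s) \<le> norm (u (s + 1) - u s) + real m / s * (norm (w s) + 2 ^ m * \<epsilon>) + \<epsilon>"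
proof -
  define B where "B = real m / s * (norm (w s) + 2 ^ m * \<epsilon>) + \<epsilon>"
  have w_le: "norm (w x) \<le> norm (w s) + 2 ^ m * \<epsilon>" if "x \<in> {s..s+1}" for x
    using that \<open>1 \<le> s\<close> by (intro radial_ode_norm_le[where g = g] deriv_w small) auto
  have dw_le: "norm (- (real m / x) *\<^sub>R w x + g x) \<le> B" if x: "x \<in> {s..s+1}" for x
  proof -
    have "real m / x \<le> real m / s" using x \<open>1 \<le> s\<close> by (intro divide_left_mono) auto
    then have "real m / x * norm (w x) \<le> real m / s * (norm (w s) + 2 ^ m * \<epsilon>)"
      using w_le[OF x] x \<open>1 \<le> s\<close> by (intro mult_mono) auto
    moreover have "norm (- (real m / x) *\<^sub>R w x) = real m / x * norm (w x)"
      using x \<open>1 \<le> s\<close> by simp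
    ultimately show ?thesis
      using small[OF x] norm_triangle_ineq[of "- (real m / x) *\<^sub>R w x" "g x"]
      unfolding B_def by linarith
  qed
  have "norm (w x - w s) \<le> B" if x: "x \<in> {s..s+1}" for x
  proof -
    have "norm (w x - w s) \<le> B * (x - s)"
      using x \<open>1 \<le> s\<close> deriv_w dw_le
      by (intro norm_diff_le_of_vector_derivative_bound[where f' = "\<lambda>x. - (real m / x) *\<^sub>R w x + g x"]) auto
    also have "\<dots> \<le> B"
      using x dw_le[of s] \<open>1 \<le> s\<close> by (intro mult_left_le) (auto intro: order_trans[OF norm_ge_zero])
    finally show ?thesis .
  qed
  then have "norm (u (s + 1) - u s - ((s + 1) - s) *\<^sub>R w s) \<le> norm ((s + 1) - s) * B"
    using deriv_u \<open>1 \<le> s\<close>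
    by (intro vector_differentiable_bound_linearization[where S = "{s..s+1}"])
      (auto intro: has_vector_derivative_at_within simp: closed_segment_eq_real_ivl)
  then have "norm (u (s + 1) - u s - w s) \<le> B" by simp
  then show ?thesis
    unfolding B_def by (smt (verit) norm_triangle_ineq2 norm_minus_commute)
qed

lemma radial_ode_speed_tendsto_zero:
  fixes u w g :: "real \<Rightarrow> 'a::real_normed_vector"
  assumes deriv_u: "\<And>r. r > 0 \<Longrightarrow> (u has_vector_derivative w r) (at r)"
    and deriv_w: "\<And>r. r > 0 \<Longrightarrow>
      (w has_vector_derivative (- (real m / r) *\<^sub>R w r + g r)) (at r)"
    and "(g \<longlongrightarrow> 0) at_top" and "(u \<longlongrightarrow> L) at_top"
  shows "(w \<longlongrightarrow> 0) at_top"
proof (rule tendstoI)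
  fix e :: real assume "e > 0"
  define K :: real where "K = 2 ^ m + 2"
  define \<epsilon> where "\<epsilon> = e / 2 / K"
  have "K > 0" by (simp add: K_def add_pos_pos)
  then have "\<epsilon> > 0" and "K * \<epsilon> = e / 2"
    using \<open>e > 0\<close> by (simp_all add: \<epsilon>_def)
  have "((\<lambda>s. u (s + 1)) \<longlongrightarrow> L) at_top"
    using filterlim_tendsto_add_at_top[OF tendsto_const filterlim_ident, of 1]
    by (auto simp: add.commute intro: filterlim_compose[OF \<open>(u \<longlongrightarrow> L) at_top\<close>])
  then have increment: "((\<lambda>s. u (s + 1) - u s) \<longlongrightarrow> 0) at_top"
    using tendsto_diff[OF _ \<open>(u \<longlongrightarrow> L) at_top\<close>] by fastforce
  have "eventually (\<lambda>s. norm (u (s + 1) - u s) < e / 4) at_top"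
    using tendstoD[OF increment, of "e / 4"] \<open>e > 0\<close> by (simp add: dist_norm)
  moreover have "eventually (\<lambda>s. \<forall>x\<ge>s. norm (g x) \<le> \<epsilon>) at_top"
    using tendstoD[OF \<open>(g \<longlongrightarrow> 0) at_top\<close> \<open>\<epsilon> > 0\<close>]
    by (intro eventually_all_ge_at_top) (auto elim: eventually_mono)
  moreover have "eventually (\<lambda>s. max 1 (2 * real m) \<le> s) at_top"
    by (rule eventually_ge_at_top)
  ultimately show "eventually (\<lambda>s. dist (w s) 0 < e) at_top"
  proof eventually_elim
    case (elim s)
    then have "1 \<le> s" and "real m / s \<le> 1 / 2" by (auto simp: field_simps)
    have "norm (w s) \<le> norm (u (s + 1) - u s) + real m / s * (norm (w s) + 2 ^ m * \<epsilon>) + \<epsilon>"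
    proof (rule radial_ode_speed_estimate[OF \<open>1 \<le> s\<close>])
      fix x assume "x \<in> {s..s+1}"
      with \<open>1 \<le> s\<close> elim have "x > 0" and "norm (g x) \<le> \<epsilon>" by auto
      then show "(u has_vector_derivative w x) (at x)"
        and "(w has_vector_derivative (- (real m / x) *\<^sub>R w x + g x)) (at x)"
        and "norm (g x) \<le> \<epsilon>"
        by (simp_all only: deriv_u deriv_w)
    qed
    also have "\<dots> \<le> norm (u (s + 1) - u s) + 1 / 2 * (norm (w s) + 2 ^ m * \<epsilon>) + \<epsilon>"
      using \<open>real m / s \<le> 1 / 2\<close> \<open>\<epsilon> > 0\<close> by (intro add_mono mult_right_mono) auto
    finally have "norm (w s) \<le> 2 * norm (u (s + 1) - u s) + K * \<epsilon>"
      by (simp add: K_def algebra_simps)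
    also have "\<dots> < e"
      using elim \<open>K * \<epsilon> = e / 2\<close> by linarith
    finally show ?case by simp
  qed
qed

theorem lemma2p1:
  fixes n k :: nat and V :: "'a::euclidean_space \<Rightarrow> real"
    and u u' :: "real \<Rightarrow> 'a" and u_inf :: 'a
  assumes "n \<ge> 2" and "k \<ge> 1"
    and "Cm (k + 1) V"
    and "\<And>r. r > 0 \<Longrightarrow> (u has_vector_derivative u' r) (at r)"
    and "\<And>r. r > 0 \<Longrightarrow>
           (u' has_vector_derivative (- ((real n - 1) / r) *\<^sub>R u' r + grad V (u r))) (at r)"
    and "(u \<longlongrightarrow> u_inf) at_top"
    and "grad V u_inf = 0"
    and "pos_def_form (hess V u_inf)"
  shows "(u' \<longlongrightarrow> 0) at_top"
proof (rule radial_ode_speed_tendsto_zero)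
  have "isCont (grad V) u_inf"
    using continuous_on_grad[of k V] \<open>Cm (k + 1) V\<close> by (simp add: continuous_on_eq_continuous_at)
  then show "((\<lambda>r. grad V (u r)) \<longlongrightarrow> 0) at_top"
    using isCont_tendsto_compose[OF _ \<open>(u \<longlongrightarrow> u_inf) at_top\<close>] \<open>grad V u_inf = 0\<close> by fastforce
  show "(u' has_vector_derivative (- (real (n - 1) / r) *\<^sub>R u' r + grad V (u r))) (at r)"
    if "r > 0" for r
    using assms(5)[OF that] \<open>n \<ge> 2\<close> by (simp add: of_nat_diff)
qed fact+

end
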